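(* Fix $\mu>0$. Then \[ \sum_{\substack{a\ge b,\ c\ge d\\ ad-bc=1}}\frac{1}{(a^2+\mu^2b^2)(c^2+\mu^2d^2)\big((a+c)^2+\mu^2(b+d)^2\big)}=\frac{1}{4\mu^2}\left(\frac{2\arctan\mu}{\mu}-\frac{2}{1+\mu^2}\right), \] where the sum is over all nonnegative integers $a,b,c,d$ with $a\ge b$, $c\ge d$ and $ad-bc=1$. *)

theory Defs
  imports "HOL-Analysis.Analysis"
begin

end

(*
  Write v = (a, b), w = (c, d), Q(x, y) = x^2 + mu^2 y^2 and B(v, w) = ac + mu^2 bd. The index
  set consists of the Farey neighbours b/a < d/c in [0, 1], and each of them is reached exactly
  once from (1, 0), (1, 1) by the mediant moves (v, w) -> (v, v + w) and (v, w) -> (v + w, w)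
  of the Stern-Brocot tree. The angle I(v, w) between (a, mu b) and (c, mu d), divided by mu, is
  additive under these moves, and since Q v Q w = B^2 + mu^2 (ad - bc)^2 the summand at (v, w) is
  G(v, w) - G(v, v + w) - G(v + w, w) for the potential G = (I - B / (Q v Q w)) / (2 mu^2).
  Summing over the first n levels of the tree leaves G at the root minus the sum of G over
  level n. Writing t = mu / B one has G = (arctan t - t / (1 + t^2)) / (2 mu^3), which lies
  between 0 and I / (2 B^2); as B >= ac exceeds the depth and I sums to arctan mu / mu on every
  level, the level sums of G tend to 0.
*)

theory Submission
  imports Defs
begin

lemma arctan_diff_nonneg:
  fixes x y :: real
  assumes "0 \<le> x" "0 \<le> y"
  shows "arctan x - arctan y = arctan ((x - y) / (1 + x * y))"
proof -
  have "0 \<le> arctan x" "0 \<le> arctan y" using assms by simp_all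
  then have range: "- (pi / 2) < arctan x - arctan y" "arctan x - arctan y < pi / 2"
    using arctan_ubound[of x] arctan_ubound[of y] by linarith+
  then have "cos (arctan x - arctan y) \<noteq> 0" using cos_gt_zero_pi by fastforce
  then have "tan (arctan x - arctan y) = (x - y) / (1 + x * y)"
    by (simp add: tan_diff tan_arctan)
  then show ?thesis using arctan_tan[OF range] by metis
qed

lemma div_one_plus_square_le_arctan:
  fixes t :: real
  assumes "0 \<le> t"
  shows "t / (1 + t\<^sup>2) \<le> arctan t"
proof -
  have "t / (1 + t\<^sup>2) = sin (arctan t) * cos (arctan t)"
    by (simp add: sin_arctan cos_arctan power2_eq_square flip: real_sqrt_mult)
  also have "\<dots> \<le> sin (arctan t)"
    by (rule mult_left_le[OF cos_le_one]) (simp add: sin_arctan assms)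
  also have "\<dots> \<le> arctan t"
    using assms by (simp add: sin_x_le_x)
  finally show ?thesis .
qed

lemma arctan_minus_div_one_plus_square_bounds:
  fixes t :: real
  assumes "0 \<le> t"
  shows "0 \<le> arctan t - t / (1 + t\<^sup>2)" "arctan t - t / (1 + t\<^sup>2) \<le> t\<^sup>2 * arctan t"
proof -
  have "0 < 1 + t\<^sup>2" by (simp add: add_pos_nonneg)
  show "0 \<le> arctan t - t / (1 + t\<^sup>2)"
    using div_one_plus_square_le_arctan[OF assms] by simp
  have "arctan t - t / (1 + t\<^sup>2) \<le> arctan t - arctan t / (1 + t\<^sup>2)"
    using arctan_le_self[OF assms] by (simp add: divide_right_mono)
  also have "\<dots> = t\<^sup>2 * arctan t / (1 + t\<^sup>2)"
    using \<open>0 < 1 + t\<^sup>2\<close> by (simp add: field_simps)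
  also have "\<dots> \<le> t\<^sup>2 * arctan t"
    using frac_le[of "t\<^sup>2 * arctan t" "t\<^sup>2 * arctan t" 1 "1 + t\<^sup>2"] assms by simp
  finally show "arctan t - t / (1 + t\<^sup>2) \<le> t\<^sup>2 * arctan t" .
qed

lemma brahmagupta_identity:
  fixes a b c d \<mu> :: "'a::comm_ring_1"
  shows "(a\<^sup>2 + \<mu>\<^sup>2 * b\<^sup>2) * (c\<^sup>2 + \<mu>\<^sup>2 * d\<^sup>2)
    = (a * c + \<mu>\<^sup>2 * b * d)\<^sup>2 + \<mu>\<^sup>2 * (a * d - b * c)\<^sup>2"
  by (simp add: power2_eq_square algebra_simps)

lemma mediant_term_identity:
  fixes a b c d \<mu> :: real
  defines "Q \<equiv> \<lambda>x y. x\<^sup>2 + \<mu>\<^sup>2 * y\<^sup>2"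
    and "\<beta> \<equiv> \<lambda>x y x' y'. x * x' + \<mu>\<^sup>2 * y * y'"
  assumes "\<mu> \<noteq> 0" and nonzero: "Q a b \<noteq> 0" "Q c d \<noteq> 0" "Q (a + c) (b + d) \<noteq> 0"
    and det: "a * d - b * c = 1"
  shows "1 / (Q a b * Q c d * Q (a + c) (b + d)) =
    (\<beta> a b (a + c) (b + d) / (Q a b * Q (a + c) (b + d))
     + \<beta> (a + c) (b + d) c d / (Q (a + c) (b + d) * Q c d)
     - \<beta> a b c d / (Q a b * Q c d)) / (2 * \<mu>\<^sup>2)"
proof -
  have "\<beta> a b (a + c) (b + d) * Q c d + \<beta> (a + c) (b + d) c d * Q a b - \<beta> a b c d * Q (a + c) (b + d)
      = 2 * (Q a b * Q c d - (\<beta> a b c d)\<^sup>2)"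
    by (simp add: Q_def \<beta>_def power2_eq_square algebra_simps)
  also have "\<dots> = 2 * \<mu>\<^sup>2"
    using brahmagupta_identity[of a \<mu> b c d] det by (simp add: Q_def \<beta>_def)
  finally show ?thesis
    using \<open>\<mu> \<noteq> 0\<close> nonzero by (simp add: field_simps)
qed

lemma has_sum_nonneg_exhaustion:
  fixes g :: "'a \<Rightarrow> real" and A :: "nat \<Rightarrow> 'a set"
  assumes nonneg: "\<And>x. 0 \<le> g x" and fin: "\<And>n. finite (A n)" and "incseq A"
    and cover: "\<And>x. \<exists>n. x \<in> A n" and lim: "(\<lambda>n. sum g (A n)) \<longlonglongrightarrow> S"
  shows "(g has_sum S) UNIV"
proof -
  have "incseq (\<lambda>n. sum g (A n))"
    using fin nonneg by (intro monoI sum_mono2) (auto dest: monoD[OF \<open>incseq A\<close>])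
  then have partial_le: "sum g (A n) \<le> S" for n
    using lim by (rule incseq_le)
  have "\<exists>n. F \<subseteq> A n" if "finite F" for F
    using that
  proof (induction F rule: finite_induct)
    case empty
    then show ?case by simp
  next
    case (insert x F)
    then obtain m n where "x \<in> A m" "F \<subseteq> A n" using cover by blast
    moreover have "A m \<subseteq> A (max m n)" "A n \<subseteq> A (max m n)"
      using \<open>incseq A\<close> by (simp_all add: monoD)
    ultimately have "insert x F \<subseteq> A (max m n)" by blast
    then show ?case by blast
  qed
  then have finite_le: "sum g F \<le> S" if "finite F" for F
    using that partial_le fin nonneg by (meson order.trans sum_mono2)
  have summable: "g summable_on UNIV"
    using nonneg finite_le by (intro nonneg_bdd_above_summable_on bdd_aboveI) auto
  have "infsum g UNIV \<le> S"
    using summable finite_le by (rule infsum_le_finite_sums)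
  moreover have "S \<le> infsum g UNIV"
    using lim finite_sum_le_infsum[OF summable fin] nonneg by (intro LIMSEQ_le_const2) auto
  ultimately show ?thesis
    using summable by (simp add: has_sum_iff)
qed

lemma sum_bool_lists_length_Suc:
  fixes h :: "bool list \<Rightarrow> 'a::comm_monoid_add"
  shows "(\<Sum>xs | length xs = Suc n. h xs) = (\<Sum>xs | length xs = n. h (True # xs) + h (False # xs))"
proof -
  have "{xs :: bool list. length xs = Suc n} = (\<lambda>(xs, x). x # xs) ` ({xs. length xs = n} \<times> UNIV)"
    using lists_length_Suc_eq[of UNIV n] by simp
  moreover have "inj_on (\<lambda>(xs, x :: bool). x # xs) ({xs. length xs = n} \<times> UNIV)"
    by (auto intro: inj_onI)
  ultimately have "(\<Sum>xs | length xs = Suc n. h xs) = (\<Sum>(xs, x) \<in> {xs. length xs = n} \<times> UNIV. h (x # xs))"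
    by (simp add: sum.reindex case_prod_unfold)
  also have "\<dots> = (\<Sum>xs | length xs = n. \<Sum>x \<in> UNIV. h (x # xs))"
    by (rule sum.cartesian_product[symmetric])
  finally show ?thesis by (simp add: UNIV_bool add.commute)
qed

lemma finite_bool_lists_length_less: "finite {xs :: bool list. length xs < n}"
  by (rule finite_subset[OF _ finite_lists_length_le[of "UNIV :: bool set" n]]) auto

lemma sum_bool_lists_telescope:
  fixes f G :: "bool list \<Rightarrow> 'a::ab_group_add"
  assumes "\<And>xs. f xs = G xs - G (True # xs) - G (False # xs)"
  shows "(\<Sum>xs | length xs < n. f xs) = G [] - (\<Sum>xs | length xs = n. G xs)"
proof (induction n)
  case 0
  then show ?case by simp
next
  case (Suc n)
  have "{xs :: bool list. length xs < Suc n} = {xs. length xs < n} \<union> {xs. length xs = n}" by auto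
  then have "(\<Sum>xs | length xs < Suc n. f xs) = (\<Sum>xs | length xs < n. f xs) + (\<Sum>xs | length xs = n. f xs)"
    using finite_bool_lists_length_less[of n] finite_lists_length_eq[of "UNIV :: bool set" n]
    by (simp add: sum.union_disjoint disjoint_iff)
  moreover have "(\<Sum>xs | length xs = n. f xs) = (\<Sum>xs | length xs = n. G xs) - (\<Sum>xs | length xs = Suc n. G xs)"
    by (simp only: assms diff_diff_eq sum_subtractf sum_bool_lists_length_Suc)
  ultimately show ?case by (simp add: Suc.IH)
qed

section \<open>Farey pairs and the Stern--Brocot tree\<close>

type_synonym quad = "nat \<times> nat \<times> nat \<times> nat"

text \<open>(a, b) and (c, d) span a unimodular cone: b/a < d/c are neighbours in a Farey sequence of [0, 1].\<close>

definition farey_pairs :: "quad set" where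
  "farey_pairs = {(a, b, c, d). b \<le> a \<and> d \<le> c \<and> int a * int d - int b * int c = 1}"

fun mediant_child :: "bool \<Rightarrow> quad \<Rightarrow> quad" where
  "mediant_child True (a, b, c, d) = (a, b, a + c, b + d)"
| "mediant_child False (a, b, c, d) = (a + c, b + d, c, d)"

fun stern_brocot :: "bool list \<Rightarrow> quad" where
  "stern_brocot [] = (1, 0, 1, 1)"
| "stern_brocot (x # xs) = mediant_child x (stern_brocot xs)"

lemma farey_pairs_pos:
  assumes "(a, b, c, d) \<in> farey_pairs"
  shows "0 < a" "0 < c"
  using assms by (auto simp: farey_pairs_def intro!: gr0I)

lemma mediant_child_farey_pairs: "q \<in> farey_pairs \<Longrightarrow> mediant_child x q \<in> farey_pairs"
  by (cases q; cases x) (auto simp: farey_pairs_def algebra_simps)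

lemma stern_brocot_farey_pairs: "stern_brocot xs \<in> farey_pairs"
  by (induction xs) (simp_all add: mediant_child_farey_pairs, simp add: farey_pairs_def)

lemma mediant_child_ne_root: "q \<in> farey_pairs \<Longrightarrow> mediant_child x q \<noteq> (1, 0, 1, 1)"
  by (cases q; cases x) (auto simp: farey_pairs_def)

lemma mediant_children_ne:
  "p \<in> farey_pairs \<Longrightarrow> q \<in> farey_pairs \<Longrightarrow> mediant_child True p \<noteq> mediant_child False q"
  by (cases p; cases q) (auto simp: farey_pairs_def)

lemma mediant_child_inj: "mediant_child x p = mediant_child x q \<Longrightarrow> p = q"
  by (cases p; cases q; cases x) auto

lemma inj_stern_brocot: "inj stern_brocot"
proof (rule injI)
  show "stern_brocot xs = stern_brocot ys \<Longrightarrow> xs = ys" for xs ys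
  proof (induction xs arbitrary: ys)
    case Nil
    then show ?case
      using mediant_child_ne_root[OF stern_brocot_farey_pairs] by (cases ys) auto
  next
    case (Cons x xs)
    then obtain y ys' where ys: "ys = y # ys'"
      using mediant_child_ne_root[OF stern_brocot_farey_pairs] by (cases ys) auto
    with Cons.prems have "x = y"
      using mediant_children_ne[OF stern_brocot_farey_pairs stern_brocot_farey_pairs]
      by (cases x; cases y) (auto dest: sym)
    with Cons ys show ?case by (auto dest: mediant_child_inj)
  qed
qed

lemma unimodular_columns_comparable:
  fixes a b c d :: nat
  assumes det: "int a * int d - int b * int c = 1"
  shows "(c \<le> a \<and> d \<le> b) \<or> (a \<le> c \<and> b \<le> d) \<or> (a, b, c, d) = (1, 0, 0, 1)"
proof (rule ccontr)
  assume "\<not> ?thesis"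
  then consider "a < c" "d < b" | "c < a" "b < d" "(a, b, c, d) \<noteq> (1, 0, 0, 1)"
    by linarith
  then show False
  proof cases
    case 1
    then have "int a * int d \<le> int c * int d" "int c * int d + int c \<le> int b * int c"
      using mult_right_mono[of "int a" "int c" "int d"] mult_right_mono[of "int d + 1" "int b" "int c"]
      by (simp_all add: algebra_simps)
    with det show False by linarith
  next
    case 2
    then have "int b * int c + int b + int c + 1 \<le> int a * int d"
      using mult_mono[of "int c + 1" "int a" "int b + 1" "int d"] by (simp add: algebra_simps)
    with det have "b = 0" "c = 0" by linarith+
    with det have "int (a * d) = 1" by simp
    then have "a * d = 1" by linarith
    with 2 \<open>b = 0\<close> \<open>c = 0\<close> show False by simp
  qed
qed

lemma farey_pairs_in_range_stern_brocot:
  "(a, b, c, d) \<in> farey_pairs \<Longrightarrow> (a, b, c, d) \<in> range stern_brocot"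
proof (induction "a + c" arbitrary: a b c d rule: less_induct)
  case less
  then have cone: "b \<le> a" "d \<le> c" and det: "int a * int d - int b * int c = 1"
    by (auto simp: farey_pairs_def)
  have pos: "0 < a" "0 < c" using farey_pairs_pos[OF less.prems] by simp_all
  text \<open>The dominating column of the unimodular matrix with columns (a - b, b) and (c - d, d) tells
    which mediant move produced (a, b, c, d).\<close>
  have "int (a - b) * int d - int b * int (c - d) = 1"
    using cone det by (simp add: algebra_simps)
  from unimodular_columns_comparable[OF this]
  consider "c - d \<le> a - b" "d \<le> b" | "a - b \<le> c - d" "b \<le> d" | "(a, b, c, d) = (1, 0, 1, 1)"
    using cone by auto
  then show ?case
  proof cases
    case 1
    then have "c \<le> a" using cone by linarith
    with 1 cone det have "(a - c, b - d, c, d) \<in> farey_pairs"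
      by (auto simp: farey_pairs_def algebra_simps)
    moreover have "a - c + c < a + c" using \<open>c \<le> a\<close> pos by simp
    ultimately have "(a - c, b - d, c, d) \<in> range stern_brocot" using less.hyps by blast
    then obtain xs where "stern_brocot xs = (a - c, b - d, c, d)" by (metis rangeE)
    then have "stern_brocot (False # xs) = (a, b, c, d)" using 1 \<open>c \<le> a\<close> by simp
    then show ?thesis by (metis rangeI)
  next
    case 2
    then have "a \<le> c" using cone by linarith
    with 2 cone det have "(a, b, c - a, d - b) \<in> farey_pairs"
      by (auto simp: farey_pairs_def algebra_simps)
    moreover have "a + (c - a) < a + c" using \<open>a \<le> c\<close> pos by simp
    ultimately have "(a, b, c - a, d - b) \<in> range stern_brocot" using less.hyps by blast
    then obtain xs where "stern_brocot xs = (a, b, c - a, d - b)" by (metis rangeE)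
    then have "stern_brocot (True # xs) = (a, b, c, d)" using 2 \<open>a \<le> c\<close> by simp
    then show ?thesis by (metis rangeI)
  next
    case 3
    then show ?thesis by (metis rangeI stern_brocot.simps(1))
  qed
qed

lemma bij_betw_stern_brocot: "bij_betw stern_brocot UNIV farey_pairs"
proof -
  have "q \<in> range stern_brocot" if "q \<in> farey_pairs" for q
    using that farey_pairs_in_range_stern_brocot by (cases q) simp
  then show ?thesis
    unfolding bij_betw_def using inj_stern_brocot stern_brocot_farey_pairs by blast
qed

lemma stern_brocot_depth: "stern_brocot xs = (a, b, c, d) \<Longrightarrow> length xs < a * c"
proof (induction xs arbitrary: a b c d)
  case Nil
  then show ?case by simp
next
  case (Cons x xs)
  obtain a' b' c' d' where parent: "stern_brocot xs = (a', b', c', d')"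
    by (cases "stern_brocot xs")
  have "0 < a'" "0 < c'" using farey_pairs_pos stern_brocot_farey_pairs parent by metis+
  then have "1 \<le> a' * a'" "1 \<le> c' * c'" by (simp_all add: Suc_le_eq)
  moreover have "length xs < a' * c'" using Cons.IH parent .
  moreover have "a' * c' < a * c"
  proof (cases x)
    case True
    then have "a * c = a' * c' + a' * a'" using Cons.prems parent by (auto simp: algebra_simps)
    with \<open>1 \<le> a' * a'\<close> show ?thesis by linarith
  next
    case False
    then have "a * c = a' * c' + c' * c'" using Cons.prems parent by (auto simp: algebra_simps)
    with \<open>1 \<le> c' * c'\<close> show ?thesis by linarith
  qed
  ultimately show ?case by simp
qed

section \<open>The telescoping potential\<close>

definition farey_term :: "real \<Rightarrow> quad \<Rightarrow> real" where
  "farey_term \<mu> = (\<lambda>(a, b, c, d).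
     1 / ((real a ^ 2 + \<mu>^2 * real b ^ 2) * (real c ^ 2 + \<mu>^2 * real d ^ 2)
          * ((real a + real c) ^ 2 + \<mu>^2 * (real b + real d) ^ 2)))"

text \<open>The angle between (a, \<mu> b) and (c, \<mu> d), divided by \<mu>.\<close>

definition farey_angle :: "real \<Rightarrow> quad \<Rightarrow> real" where
  "farey_angle \<mu> = (\<lambda>(a, b, c, d). (arctan (\<mu> * real d / real c) - arctan (\<mu> * real b / real a)) / \<mu>)"

definition farey_ratio :: "real \<Rightarrow> quad \<Rightarrow> real" where
  "farey_ratio \<mu> = (\<lambda>(a, b, c, d).
     (real a * real c + \<mu>\<^sup>2 * real b * real d)
     / ((real a ^ 2 + \<mu>\<^sup>2 * real b ^ 2) * (real c ^ 2 + \<mu>\<^sup>2 * real d ^ 2)))"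

definition farey_potential :: "real \<Rightarrow> quad \<Rightarrow> real" where
  "farey_potential \<mu> q = (farey_angle \<mu> q - farey_ratio \<mu> q) / (2 * \<mu>\<^sup>2)"

lemma farey_pairs_det_real:
  assumes "(a, b, c, d) \<in> farey_pairs"
  shows "real a * real d - real b * real c = 1"
proof -
  have "int a * int d - int b * int c = 1" using assms by (simp add: farey_pairs_def)
  then have "real_of_int (int a * int d - int b * int c) = 1" by simp
  then show ?thesis by simp
qed

lemma farey_angle_mediant:
  "farey_angle \<mu> q = farey_angle \<mu> (mediant_child True q) + farey_angle \<mu> (mediant_child False q)"
  by (cases q) (simp add: farey_angle_def diff_divide_distrib)

lemma farey_angle_eq_arctan:
  assumes "0 < \<mu>" and q: "(a, b, c, d) \<in> farey_pairs"
  shows "farey_angle \<mu> (a, b, c, d) = arctan (\<mu> / (real a * real c + \<mu>\<^sup>2 * real b * real d)) / \<mu>"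
proof -
  have "0 < a" "0 < c" using farey_pairs_pos[OF q] by simp_all
  moreover note det = farey_pairs_det_real[OF q]
  moreover have "0 < real a * real c + \<mu>\<^sup>2 * real b * real d"
    using \<open>0 < a\<close> \<open>0 < c\<close> by (simp add: add_pos_nonneg)
  ultimately have "(\<mu> * real d / real c - \<mu> * real b / real a) / (1 + \<mu> * real d / real c * (\<mu> * real b / real a))
      = \<mu> / (real a * real c + \<mu>\<^sup>2 * real b * real d)"
    by (simp add: field_simps power2_eq_square)
  then show ?thesis
    using assms by (simp add: farey_angle_def arctan_diff_nonneg)
qed

lemma farey_angle_nonneg:
  assumes "0 < \<mu>" "(a, b, c, d) \<in> farey_pairs"
  shows "0 \<le> farey_angle \<mu> (a, b, c, d)"
  using assms by (simp add: farey_angle_eq_arctan)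

lemma farey_potential_eq_arctan:
  assumes "0 < \<mu>" and q: "(a, b, c, d) \<in> farey_pairs"
  defines "t \<equiv> \<mu> / (real a * real c + \<mu>\<^sup>2 * real b * real d)"
  shows "farey_potential \<mu> (a, b, c, d) = (arctan t - t / (1 + t\<^sup>2)) / (2 * \<mu> ^ 3)"
proof -
  define B where "B = real a * real c + \<mu>\<^sup>2 * real b * real d"
  have "0 < a" "0 < c" using farey_pairs_pos[OF q] by simp_all
  then have "0 < B" by (simp add: B_def add_pos_nonneg)
  have t: "t = \<mu> / B" by (simp add: t_def B_def)
  have "farey_potential \<mu> (a, b, c, d) = (farey_angle \<mu> (a, b, c, d)
      - B / ((real a ^ 2 + \<mu>\<^sup>2 * real b ^ 2) * (real c ^ 2 + \<mu>\<^sup>2 * real d ^ 2))) / (2 * \<mu>\<^sup>2)"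
    by (simp add: farey_potential_def farey_ratio_def B_def)
  also have "(real a ^ 2 + \<mu>\<^sup>2 * real b ^ 2) * (real c ^ 2 + \<mu>\<^sup>2 * real d ^ 2) = B\<^sup>2 + \<mu>\<^sup>2"
    using brahmagupta_identity[of "real a" \<mu> "real b" "real c" "real d"] farey_pairs_det_real[OF q]
    by (simp add: B_def)
  also have "farey_angle \<mu> (a, b, c, d) = arctan t / \<mu>"
    using farey_angle_eq_arctan[OF assms(1) q] by (simp add: t_def)
  also have "B / (B\<^sup>2 + \<mu>\<^sup>2) = t / (1 + t\<^sup>2) / \<mu>"
  proof -
    have "t / (1 + t\<^sup>2) = \<mu> * B / (B\<^sup>2 + \<mu>\<^sup>2)"
      using \<open>0 < B\<close> by (simp add: t field_simps power2_eq_square)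
    then show ?thesis using \<open>0 < \<mu>\<close> by simp
  qed
  also have "(arctan t / \<mu> - t / (1 + t\<^sup>2) / \<mu>) / (2 * \<mu>\<^sup>2)
      = (arctan t - t / (1 + t\<^sup>2)) / (2 * \<mu> ^ 3)"
    by (simp add: diff_divide_distrib power3_eq_cube power2_eq_square mult_ac)
  finally show ?thesis .
qed

lemma farey_potential_nonneg:
  assumes "0 < \<mu>" "q \<in> farey_pairs"
  shows "0 \<le> farey_potential \<mu> q"
proof -
  obtain a b c d where q: "q = (a, b, c, d)" by (cases q)
  have "0 \<le> \<mu> / (real a * real c + \<mu>\<^sup>2 * real b * real d)"
    using \<open>0 < \<mu>\<close> by simp
  from arctan_minus_div_one_plus_square_bounds(1)[OF this] show ?thesis
    using assms by (simp add: q farey_potential_eq_arctan)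
qed

lemma farey_potential_le:
  assumes "0 < \<mu>" and q: "(a, b, c, d) \<in> farey_pairs"
  shows "farey_potential \<mu> (a, b, c, d) \<le> farey_angle \<mu> (a, b, c, d) / (2 * (real a * real c)\<^sup>2)"
proof -
  define B where "B = real a * real c + \<mu>\<^sup>2 * real b * real d"
  define t where "t = \<mu> / B"
  have "0 < a" "0 < c" using farey_pairs_pos[OF q] by simp_all
  then have "0 < real a * real c" "real a * real c \<le> B" by (simp_all add: B_def)
  then have "0 < B" by linarith
  have "0 \<le> t" using \<open>0 < B\<close> \<open>0 < \<mu>\<close> by (simp add: t_def)
  have angle: "farey_angle \<mu> (a, b, c, d) = arctan t / \<mu>"
    using farey_angle_eq_arctan[OF assms] by (simp add: t_def B_def)
  have "farey_potential \<mu> (a, b, c, d) = (arctan t - t / (1 + t\<^sup>2)) / (2 * \<mu> ^ 3)"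
    using farey_potential_eq_arctan[OF assms] by (simp add: t_def B_def)
  also have "\<dots> \<le> t\<^sup>2 * arctan t / (2 * \<mu> ^ 3)"
    using arctan_minus_div_one_plus_square_bounds(2)[OF \<open>0 \<le> t\<close>] \<open>0 < \<mu>\<close>
    by (simp add: divide_right_mono)
  also have "\<dots> = farey_angle \<mu> (a, b, c, d) / (2 * B\<^sup>2)"
    using \<open>0 < B\<close> \<open>0 < \<mu>\<close> by (simp add: angle t_def power2_eq_square power3_eq_cube)
  also have "\<dots> \<le> farey_angle \<mu> (a, b, c, d) / (2 * (real a * real c)\<^sup>2)"
  proof (rule divide_left_mono)
    show "2 * (real a * real c)\<^sup>2 \<le> 2 * B\<^sup>2"
      using \<open>0 < real a * real c\<close> \<open>real a * real c \<le> B\<close> by (simp add: power_mono)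
    show "0 < 2 * B\<^sup>2 * (2 * (real a * real c)\<^sup>2)"
      using \<open>0 < B\<close> \<open>0 < a\<close> \<open>0 < c\<close> by simp
  qed (rule farey_angle_nonneg[OF assms])
  finally show ?thesis .
qed

lemma farey_term_eq_ratios:
  assumes "0 < \<mu>" and q: "q \<in> farey_pairs"
  shows "farey_term \<mu> q = (farey_ratio \<mu> (mediant_child True q) + farey_ratio \<mu> (mediant_child False q)
    - farey_ratio \<mu> q) / (2 * \<mu>\<^sup>2)"
proof -
  obtain a b c d where q_eq: "q = (a, b, c, d)" by (cases q)
  have "0 < a" "0 < c" using farey_pairs_pos q q_eq by simp_all
  then have "0 < real a ^ 2 + \<mu>\<^sup>2 * real b ^ 2" "0 < real c ^ 2 + \<mu>\<^sup>2 * real d ^ 2"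
    "0 < (real a + real c) ^ 2 + \<mu>\<^sup>2 * (real b + real d) ^ 2"
    by (simp_all add: add_pos_nonneg)
  note nonzero = this[THEN dual_order.strict_implies_not_eq]
  from mediant_term_identity[OF _ nonzero farey_pairs_det_real[OF q[unfolded q_eq]]] \<open>0 < \<mu>\<close>
  show ?thesis by (simp add: q_eq farey_term_def farey_ratio_def)
qed

lemma farey_term_telescope:
  assumes "0 < \<mu>" and "q \<in> farey_pairs"
  shows "farey_term \<mu> q
    = farey_potential \<mu> q - farey_potential \<mu> (mediant_child True q) - farey_potential \<mu> (mediant_child False q)"
  using farey_term_eq_ratios[OF assms] farey_angle_mediant[of \<mu> q]
  by (simp add: farey_potential_def diff_divide_distrib add_divide_distrib)

lemma sum_farey_angle_level: "(\<Sum>xs | length xs = n. farey_angle \<mu> (stern_brocot xs)) = arctan \<mu> / \<mu>"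
proof -
  have "(\<Sum>xs | length (xs :: bool list) < n. 0)
      = farey_angle \<mu> (stern_brocot []) - (\<Sum>xs | length xs = n. farey_angle \<mu> (stern_brocot xs))"
  proof (rule sum_bool_lists_telescope[where G = "\<lambda>xs. farey_angle \<mu> (stern_brocot xs)"])
    show "0 = farey_angle \<mu> (stern_brocot xs) - farey_angle \<mu> (stern_brocot (True # xs))
        - farey_angle \<mu> (stern_brocot (False # xs))" for xs
      using farey_angle_mediant[of \<mu> "stern_brocot xs"] by simp
  qed
  then show ?thesis by (simp add: farey_angle_def)
qed

lemma farey_potential_level_tendsto_zero:
  assumes "0 < \<mu>"
  shows "(\<lambda>n. \<Sum>xs | length xs = n. farey_potential \<mu> (stern_brocot xs)) \<longlonglongrightarrow> 0"
proof -
  have term_le: "farey_potential \<mu> (stern_brocot xs) \<le> farey_angle \<mu> (stern_brocot xs) / real (Suc (length xs))"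
    for xs
  proof -
    obtain a b c d where q: "stern_brocot xs = (a, b, c, d)" by (cases "stern_brocot xs")
    define x where "x = real a * real c"
    have "real (Suc (length xs)) \<le> x"
      using stern_brocot_depth[OF q] by (simp add: x_def flip: of_nat_mult)
    moreover have "x \<le> 2 * x\<^sup>2"
      using calculation mult_left_mono[of 1 x x] by (simp add: power2_eq_square)
    ultimately have "farey_angle \<mu> (a, b, c, d) / (2 * x\<^sup>2)
        \<le> farey_angle \<mu> (a, b, c, d) / real (Suc (length xs))"
      using farey_angle_nonneg[OF assms stern_brocot_farey_pairs[of xs, unfolded q]]
      by (intro divide_left_mono) simp_all
    with farey_potential_le[OF assms stern_brocot_farey_pairs[of xs, unfolded q]] show ?thesis
      by (simp add: q x_def)
  qed
  have upper: "(\<Sum>xs | length xs = n. farey_potential \<mu> (stern_brocot xs))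
      \<le> arctan \<mu> / \<mu> / real (Suc n)" for n
  proof -
    have "(\<Sum>xs | length xs = n. farey_potential \<mu> (stern_brocot xs))
        \<le> (\<Sum>xs | length xs = n. farey_angle \<mu> (stern_brocot xs) / real (Suc n))"
    proof (rule sum_mono)
      show "farey_potential \<mu> (stern_brocot xs) \<le> farey_angle \<mu> (stern_brocot xs) / real (Suc n)"
        if "xs \<in> {xs. length xs = n}" for xs
        using that term_le[of xs] by simp
    qed
    then show ?thesis by (simp add: sum_divide_distrib[symmetric] sum_farey_angle_level)
  qed
  have lower: "0 \<le> (\<Sum>xs | length xs = n. farey_potential \<mu> (stern_brocot xs))" for n
    using farey_potential_nonneg[OF assms stern_brocot_farey_pairs] by (simp add: sum_nonneg)
  show ?thesis
  proof (rule tendsto_sandwich[of "\<lambda>_. 0" _ _ "\<lambda>n. arctan \<mu> / \<mu> / real (Suc n)"])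
    show "(\<lambda>n. arctan \<mu> / \<mu> / real (Suc n)) \<longlonglongrightarrow> 0"
      using LIMSEQ_Suc[OF lim_const_over_n] .
  qed (use lower upper in simp_all)
qed

lemma has_sum_farey_term_stern_brocot:
  assumes "0 < \<mu>"
  shows "((\<lambda>xs. farey_term \<mu> (stern_brocot xs)) has_sum farey_potential \<mu> (1, 0, 1, 1)) UNIV"
proof (rule has_sum_nonneg_exhaustion[where A = "\<lambda>n. {xs. length xs < n}"])
  show "0 \<le> farey_term \<mu> (stern_brocot xs)" for xs
    by (cases "stern_brocot xs") (simp add: farey_term_def)
  show "finite {xs :: bool list. length xs < n}" for n
    by (rule finite_bool_lists_length_less)
  show "incseq (\<lambda>n. {xs :: bool list. length xs < n})"
    by (auto simp: incseq_def)
  show "\<exists>n. xs \<in> {xs. length xs < n}" for xs :: "bool list"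
    by auto
  have "(\<Sum>xs | length xs < n. farey_term \<mu> (stern_brocot xs))
      = farey_potential \<mu> (1, 0, 1, 1) - (\<Sum>xs | length xs = n. farey_potential \<mu> (stern_brocot xs))" for n
    using farey_term_telescope[OF assms stern_brocot_farey_pairs]
    by (subst sum_bool_lists_telescope[where G = "\<lambda>xs. farey_potential \<mu> (stern_brocot xs)"]) simp_all
  then show "(\<lambda>n. \<Sum>xs | length xs < n. farey_term \<mu> (stern_brocot xs))
      \<longlonglongrightarrow> farey_potential \<mu> (1, 0, 1, 1)"
    using tendsto_diff[OF tendsto_const farey_potential_level_tendsto_zero[OF assms]] by simp
qed

theorem theorem9:
  fixes \<mu> :: real
  assumes "\<mu> > 0"
  shows "((\<lambda>(a::nat, b::nat, c::nat, d::nat).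
            1 / ((real a ^ 2 + \<mu>^2 * real b ^ 2) * (real c ^ 2 + \<mu>^2 * real d ^ 2)
                 * ((real a + real c) ^ 2 + \<mu>^2 * (real b + real d) ^ 2)))
         has_sum (1 / (4 * \<mu>^2) * (2 * arctan \<mu> / \<mu> - 2 / (1 + \<mu>^2))))
         {(a, b, c, d). b \<le> a \<and> d \<le> c \<and> int a * int d - int b * int c = 1}"
proof -
  have "(farey_term \<mu> has_sum farey_potential \<mu> (1, 0, 1, 1)) farey_pairs"
    using has_sum_farey_term_stern_brocot[OF assms]
    by (simp add: has_sum_reindex_bij_betw[OF bij_betw_stern_brocot])
  moreover have "farey_potential \<mu> (1, 0, 1, 1) = 1 / (4 * \<mu>^2) * (2 * arctan \<mu> / \<mu> - 2 / (1 + \<mu>^2))"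
    using assms by (simp add: farey_potential_def farey_angle_def farey_ratio_def field_simps)
  ultimately show ?thesis
    by (simp add: farey_term_def farey_pairs_def)
qed

end
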